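(* Let $P$ be a finite poset and $q$ a positive integer such that every chain of $P$ has at most $q$ elements. Then the restriction function $R(p)=\{k\in\mathbb{Z}:1+\delta(p)\le k\le q-\nu(p)\}$ is consistent.
   Context: For $p\in P$, $\delta(p)$ is the number of elements less than $p$ in a chain of maximum size containing $p$, and $\nu(p)$ is the number of elements greater than $p$ in such a chain. A restriction function assigns to each $p$ a nonempty finite subset of $\mathbb{Z}$; it is consistent if for every cover $x\lessdot y$ in $P$, $\min R(x)<\min R(y)$ and $\max R(x)<\max R(y)$. *)

theory Defs
  imports Main
begin

definition partial_order_on_set :: "'a set \<Rightarrow> ('a \<Rightarrow> 'a \<Rightarrow> bool) \<Rightarrow> bool" where
  "partial_order_on_set P le \<longleftrightarrow>
     (\<forall>x\<in>P. le x x) \<and>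
     (\<forall>x\<in>P. \<forall>y\<in>P. le x y \<and> le y x \<longrightarrow> x = y) \<and>
     (\<forall>x\<in>P. \<forall>y\<in>P. \<forall>z\<in>P. le x y \<and> le y z \<longrightarrow> le x z)"

definition less_po :: "('a \<Rightarrow> 'a \<Rightarrow> bool) \<Rightarrow> 'a \<Rightarrow> 'a \<Rightarrow> bool" where
  "less_po le x y \<longleftrightarrow> le x y \<and> x \<noteq> y"

definition is_chain :: "'a set \<Rightarrow> ('a \<Rightarrow> 'a \<Rightarrow> bool) \<Rightarrow> 'a set \<Rightarrow> bool" where
  "is_chain P le C \<longleftrightarrow> C \<subseteq> P \<and> (\<forall>x\<in>C. \<forall>y\<in>C. le x y \<or> le y x)"

definition covers :: "'a set \<Rightarrow> ('a \<Rightarrow> 'a \<Rightarrow> bool) \<Rightarrow> 'a \<Rightarrow> 'a \<Rightarrow> bool" where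
  "covers P le x y \<longleftrightarrow> x \<in> P \<and> y \<in> P \<and> less_po le x y \<and>
     \<not> (\<exists>z\<in>P. less_po le x z \<and> less_po le z y)"

definition max_chain_through :: "'a set \<Rightarrow> ('a \<Rightarrow> 'a \<Rightarrow> bool) \<Rightarrow> 'a \<Rightarrow> 'a set \<Rightarrow> bool" where
  "max_chain_through P le p C \<longleftrightarrow> is_chain P le C \<and> p \<in> C \<and>
     (\<forall>D. is_chain P le D \<and> p \<in> D \<longrightarrow> card D \<le> card C)"

definition delta :: "'a set \<Rightarrow> ('a \<Rightarrow> 'a \<Rightarrow> bool) \<Rightarrow> 'a \<Rightarrow> nat" where
  "delta P le p = card {x \<in> (SOME C. max_chain_through P le p C). less_po le x p}"

definition nu :: "'a set \<Rightarrow> ('a \<Rightarrow> 'a \<Rightarrow> bool) \<Rightarrow> 'a \<Rightarrow> nat" where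
  "nu P le p = card {x \<in> (SOME C. max_chain_through P le p C). less_po le p x}"

definition consistent_restriction ::
  "'a set \<Rightarrow> ('a \<Rightarrow> 'a \<Rightarrow> bool) \<Rightarrow> ('a \<Rightarrow> int set) \<Rightarrow> bool" where
  "consistent_restriction P le R \<longleftrightarrow>
     (\<forall>p\<in>P. R p \<noteq> {} \<and> finite (R p)) \<and>
     (\<forall>x y. covers P le x y \<longrightarrow> Min (R x) < Min (R y) \<and> Max (R x) < Max (R y))"

end

theory Submission
  imports Defs
begin

text \<open>Let \<open>C\<^sub>p\<close> be a maximum chain through \<open>p\<close>. For \<open>x < y\<close>, the elements of \<open>C\<^sub>x\<close> below \<open>x\<close>
  together with \<open>x\<close> form a chain strictly below \<open>y\<close>; grafting it onto \<open>y\<close> and the part of \<open>C\<^sub>y\<close>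
  above \<open>y\<close> gives a chain through \<open>y\<close>, so maximality of \<open>C\<^sub>y\<close> yields \<open>\<delta>(x) + 1 \<le> \<delta>(y)\<close>.
  Dually \<open>\<nu>(y) < \<nu>(x)\<close>. Finally \<open>\<delta>(p) + 1 + \<nu>(p) = |C\<^sub>p| \<le> q\<close>, so every \<open>R(p)\<close> is a
  nonempty integer interval whose endpoints move up along covers.\<close>

lemma partial_order_on_set_refl:
  "partial_order_on_set P le \<Longrightarrow> x \<in> P \<Longrightarrow> le x x"
  unfolding partial_order_on_set_def by blast

lemma partial_order_on_set_antisym:
  "partial_order_on_set P le \<Longrightarrow> x \<in> P \<Longrightarrow> y \<in> P \<Longrightarrow> le x y \<Longrightarrow> le y x \<Longrightarrow> x = y"
  unfolding partial_order_on_set_def by blast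

lemma partial_order_on_set_less_trans:
  assumes "partial_order_on_set P le" "x \<in> P" "y \<in> P" "z \<in> P"
    and "less_po le x y" "less_po le y z"
  shows "less_po le x z"
proof -
  have "le x z"
    using assms unfolding partial_order_on_set_def less_po_def by blast
  moreover have "x \<noteq> z"
    using assms partial_order_on_set_antisym[OF assms(1)] unfolding less_po_def by blast
  ultimately show ?thesis by (simp add: less_po_def)
qed

lemma partial_order_on_set_converse:
  "partial_order_on_set P le \<Longrightarrow> partial_order_on_set P (\<lambda>x y. le y x)"
  unfolding partial_order_on_set_def by blast

lemma is_chain_converse: "is_chain P (\<lambda>x y. le y x) = is_chain P le"
  by (auto simp: is_chain_def fun_eq_iff)

lemma max_chain_through_converse:
  "max_chain_through P (\<lambda>x y. le y x) = max_chain_through P le"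
  unfolding max_chain_through_def is_chain_converse[of P le] ..

lemma nu_eq_delta_converse: "nu P le p = delta P (\<lambda>x y. le y x) p"
  unfolding nu_def delta_def max_chain_through_converse[of P le] less_po_def
  by (intro arg_cong[where f = card] Collect_cong) blast

lemma covers_imp_less: "covers P le x y \<Longrightarrow> x \<in> P \<and> y \<in> P \<and> less_po le x y"
  by (simp add: covers_def)

lemma card_chain_split:
  assumes "partial_order_on_set P le" "is_chain P le C" "finite C" "p \<in> C"
  shows "card C = card {x \<in> C. less_po le x p} + 1 + card {x \<in> C. less_po le p x}"
proof -
  let ?A = "{x \<in> C. less_po le x p}" and ?B = "{x \<in> C. less_po le p x}"
  have "C \<subseteq> P" and comparable: "\<And>x. x \<in> C \<Longrightarrow> le x p \<or> le p x"
    using assms(2,4) by (auto simp: is_chain_def)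
  then have disjoint: "?A \<inter> ?B = {}"
    using partial_order_on_set_antisym[OF assms(1)] assms(4) unfolding less_po_def by blast
  have "C = insert p (?A \<union> ?B)"
    using comparable assms(4) by (auto simp: less_po_def)
  then have "card C = card (insert p (?A \<union> ?B))"
    by (rule arg_cong)
  also have "\<dots> = Suc (card (?A \<union> ?B))"
    using assms(3) by (simp add: less_po_def)
  also have "card (?A \<union> ?B) = card ?A + card ?B"
    using assms(3) disjoint by (simp add: card_Un_disjoint)
  finally show ?thesis by simp
qed

definition chosen_max_chain :: "'a set \<Rightarrow> ('a \<Rightarrow> 'a \<Rightarrow> bool) \<Rightarrow> 'a \<Rightarrow> 'a set" where
  "chosen_max_chain P le p = (SOME C. max_chain_through P le p C)"

lemma delta_chosen_max_chain:
  "delta P le p = card {x \<in> chosen_max_chain P le p. less_po le x p}"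
  unfolding delta_def chosen_max_chain_def ..

lemma nu_chosen_max_chain:
  "nu P le p = card {x \<in> chosen_max_chain P le p. less_po le p x}"
  unfolding nu_def chosen_max_chain_def ..

lemma max_chain_through_chosen_max_chain:
  assumes "finite P" "partial_order_on_set P le" "p \<in> P"
  shows "max_chain_through P le p (chosen_max_chain P le p)"
proof -
  have "\<exists>C. (is_chain P le C \<and> p \<in> C) \<and>
      (\<forall>D. is_chain P le D \<and> p \<in> D \<longrightarrow> card D \<le> card C)"
  proof (rule ex_has_greatest_nat[where k = "{p}" and b = "Suc (card P)"])
    show "is_chain P le {p} \<and> p \<in> {p}"
      using partial_order_on_set_refl[OF assms(2,3)] assms(3) by (simp add: is_chain_def)
    show "\<forall>D. is_chain P le D \<and> p \<in> D \<longrightarrow> card D < Suc (card P)"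
      using assms(1) by (auto simp: is_chain_def less_Suc_eq_le intro: card_mono)
  qed
  then have "\<exists>C. max_chain_through P le p C"
    by (simp add: max_chain_through_def)
  then show ?thesis
    unfolding chosen_max_chain_def by (rule someI_ex)
qed

lemma card_chain_below_le_delta:
  assumes "finite P" "partial_order_on_set P le" "p \<in> P"
    and "is_chain P le D" "\<forall>d \<in> D. less_po le d p"
  shows "card D \<le> delta P le p"
proof -
  let ?C = "chosen_max_chain P le p"
  let ?B = "{x \<in> ?C. less_po le p x}"
  let ?E = "insert p (D \<union> ?B)"
  have C: "max_chain_through P le p ?C"
    by (rule max_chain_through_chosen_max_chain[OF assms(1-3)])
  then have "?C \<subseteq> P" "is_chain P le ?C"
    by (auto simp: max_chain_through_def is_chain_def)
  have "D \<subseteq> P" using assms(4) by (simp add: is_chain_def)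
  have D_B: "less_po le d b" if "d \<in> D" "b \<in> ?B" for d b
    using partial_order_on_set_less_trans[OF assms(2) _ assms(3)] that assms(5)
      \<open>D \<subseteq> P\<close> \<open>?C \<subseteq> P\<close> by blast
  have E_chain: "is_chain P le ?E"
    using assms(3,4) \<open>is_chain P le ?C\<close> D_B
      partial_order_on_set_refl[OF assms(2,3)] assms(5)
    unfolding is_chain_def less_po_def by blast
  have E_finite: "finite ?E"
    using assms(1) \<open>D \<subseteq> P\<close> \<open>?C \<subseteq> P\<close> assms(3) by (auto intro: finite_subset)
  have not_above: "\<not> less_po le p d" if "d \<in> D" for d
    using that assms(3,5) \<open>D \<subseteq> P\<close> partial_order_on_set_antisym[OF assms(2)]
    by (fastforce simp: less_po_def)
  have not_below: "\<not> less_po le b p" if "b \<in> ?B" for b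
    using that assms(3) \<open>?C \<subseteq> P\<close> partial_order_on_set_antisym[OF assms(2)]
    by (fastforce simp: less_po_def)
  have "card ?E = card {x \<in> ?E. less_po le x p} + 1 + card {x \<in> ?E. less_po le p x}"
    by (rule card_chain_split[OF assms(2) E_chain E_finite insertI1])
  also have "{x \<in> ?E. less_po le x p} = D"
    using assms(5) not_below by (auto simp: less_po_def)
  also have "{x \<in> ?E. less_po le p x} = ?B"
    using not_above by (auto simp: less_po_def)
  finally have "card ?E = card D + 1 + card ?B" .
  moreover have "card ?C = delta P le p + 1 + card ?B"
    using card_chain_split[OF assms(2) \<open>is_chain P le ?C\<close>] C \<open>?C \<subseteq> P\<close> assms(1)
    by (simp add: max_chain_through_def delta_chosen_max_chain finite_subset)
  moreover have "card ?E \<le> card ?C"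
    using C E_chain by (simp add: max_chain_through_def)
  ultimately show ?thesis by simp
qed

lemma delta_strict_mono:
  assumes "finite P" "partial_order_on_set P le" "x \<in> P" "y \<in> P" "less_po le x y"
  shows "delta P le x < delta P le y"
proof -
  let ?C = "chosen_max_chain P le x"
  let ?A = "{z \<in> ?C. less_po le z x}"
  have C: "max_chain_through P le x ?C"
    by (rule max_chain_through_chosen_max_chain[OF assms(1-3)])
  then have "?C \<subseteq> P" "is_chain P le ?C" "x \<in> ?C"
    by (auto simp: max_chain_through_def is_chain_def)
  have "is_chain P le (insert x ?A)"
    using \<open>is_chain P le ?C\<close> \<open>x \<in> ?C\<close> by (auto simp: is_chain_def)
  moreover have "\<forall>d \<in> insert x ?A. less_po le d y"
    using partial_order_on_set_less_trans[OF assms(2) _ assms(3,4) _ assms(5)] \<open>?C \<subseteq> P\<close> assms(5)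
    by blast
  ultimately have "card (insert x ?A) \<le> delta P le y"
    by (rule card_chain_below_le_delta[OF assms(1,2,4)])
  moreover have "card (insert x ?A) = delta P le x + 1"
    using \<open>?C \<subseteq> P\<close> assms(1) by (simp add: delta_chosen_max_chain less_po_def finite_subset)
  ultimately show ?thesis by simp
qed

lemma nu_strict_antimono:
  assumes "finite P" "partial_order_on_set P le" "x \<in> P" "y \<in> P" "less_po le x y"
  shows "nu P le y < nu P le x"
proof -
  have "less_po (\<lambda>x y. le y x) y x"
    using assms(5) by (auto simp: less_po_def)
  then show ?thesis
    unfolding nu_eq_delta_converse
    by (rule delta_strict_mono[OF assms(1) partial_order_on_set_converse[OF assms(2)] assms(4,3)])
qed

lemma delta_plus_nu_le_chain_bound:
  assumes "finite P" "partial_order_on_set P le" "p \<in> P"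
    and "\<And>C. is_chain P le C \<Longrightarrow> card C \<le> q"
  shows "delta P le p + 1 + nu P le p \<le> q"
proof -
  let ?C = "chosen_max_chain P le p"
  have C: "max_chain_through P le p ?C"
    by (rule max_chain_through_chosen_max_chain[OF assms(1-3)])
  then have "is_chain P le ?C" "finite ?C" "p \<in> ?C"
    using assms(1) by (auto simp: max_chain_through_def is_chain_def intro: finite_subset)
  then have "card ?C = delta P le p + 1 + nu P le p"
    unfolding delta_chosen_max_chain nu_chosen_max_chain by (rule card_chain_split[OF assms(2)])
  moreover have "card ?C \<le> q" using C assms(4) by (simp add: max_chain_through_def)
  ultimately show ?thesis by simp
qed

lemma Min_atLeastAtMost:
  fixes a b :: "'a :: linorder"
  shows "a \<le> b \<Longrightarrow> finite {a..b} \<Longrightarrow> Min {a..b} = a"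
  by (rule Min_eqI) auto

lemma Max_atLeastAtMost:
  fixes a b :: "'a :: linorder"
  shows "a \<le> b \<Longrightarrow> finite {a..b} \<Longrightarrow> Max {a..b} = b"
  by (rule Max_eqI) auto

theorem lemma2p18:
  fixes P :: "'a set" and le :: "'a \<Rightarrow> 'a \<Rightarrow> bool" and q :: nat
  assumes "finite P"
    and "partial_order_on_set P le"
    and "q > 0"
    and "\<And>C. is_chain P le C \<Longrightarrow> card C \<le> q"
  shows "consistent_restriction P le
           (\<lambda>p. {k :: int. 1 + int (delta P le p) \<le> k \<and> k \<le> int q - int (nu P le p)})"
proof -
  define lo where "lo p = 1 + int (delta P le p)" for p
  define hi where "hi p = int q - int (nu P le p)" for p
  have R_eq: "(\<lambda>p. {k :: int. 1 + int (delta P le p) \<le> k \<and> k \<le> int q - int (nu P le p)})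
      = (\<lambda>p. {lo p..hi p})"
    by (auto simp: lo_def hi_def)
  have lo_le_hi: "lo p \<le> hi p" if "p \<in> P" for p
    using delta_plus_nu_le_chain_bound[OF assms(1,2) that assms(4)]
    by (simp add: lo_def hi_def)
  have "Min {lo x..hi x} < Min {lo y..hi y} \<and> Max {lo x..hi x} < Max {lo y..hi y}"
    if "covers P le x y" for x y
  proof -
    have "x \<in> P" "y \<in> P" "less_po le x y"
      using covers_imp_less[OF that] by auto
    then have "lo x < lo y" "hi x < hi y"
      using delta_strict_mono[OF assms(1,2)] nu_strict_antimono[OF assms(1,2)]
      by (simp_all add: lo_def hi_def)
    then show ?thesis
      using lo_le_hi \<open>x \<in> P\<close> \<open>y \<in> P\<close> by (simp add: Min_atLeastAtMost Max_atLeastAtMost)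
  qed
  moreover have "{lo p..hi p} \<noteq> {} \<and> finite {lo p..hi p}" if "p \<in> P" for p
    using lo_le_hi[OF that] by simp
  ultimately show ?thesis
    unfolding consistent_restriction_def R_eq by simp
qed

end
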